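(* Let $g>\tfrac12$, let $M_{\mathrm{I}},M_{\mathrm{II}}\in\mathbb{Z}_{\ge0}$, $M=M_{\mathrm{I}}+M_{\mathrm{II}}$, let $\mathcal{D}=((d_1,t_1),\ldots,(d_M,t_M))$ be an ordered list of pairwise distinct seed labels as described in the context, containing exactly $M_{\mathrm{I}}$ labels of Type I and $M_{\mathrm{II}}$ labels of Type II, and let $n\in\mathbb{Z}_{\ge0}$. For $N\in\{M,M+1\}$, $j=1,\ldots,N$ and $\eta>0$ define $$X^{(N)}_{(\mathrm{v},\mathrm{I}),j}(\eta)=L^{(g+j-\frac32)}_{\mathrm{v}}(-\eta),\qquad X^{(N)}_{(\mathrm{v},\mathrm{II}),j}(\eta)=(-1)^{j-1}\big(g-\tfrac12-\mathrm{v}\big)_{j-1}\,\eta^{N-j}L^{(\frac32-g-j)}_{\mathrm{v}}(\eta),$$ $$Z^{(N)}_{n,j}(\eta)=(-1)^{j-1}L^{(g+j-\frac32)}_{n+1-j}(\eta),$$ and let $\vec X^{(N)}_{(\mathrm{v},t)}$, $\vec Z^{(N)}_n$ denote the column vectors $(X^{(N)}_{(\mathrm{v},t),j})_{j=1}^N$, $(Z^{(N)}_{n,j})_{j=1}^N$. Then for $\eta>0$, $$\Xi_{\mathcal{D}}(\eta)=\eta^{-M_{\mathrm{II}}(M_{\mathrm{II}}-1)}\det\big(\vec X^{(M)}_{(d_1,t_1)}(\eta)\ \cdots\ \vec X^{(M)}_{(d_M,t_M)}(\eta)\big),$$ $$P_{\mathcal{D},n}(\eta)=\eta^{-M_{\mathrm{II}}(M_{\mathrm{II}}-1)}\det\big(\vec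 X^{(M+1)}_{(d_1,t_1)}(\eta)\ \cdots\ \vec X^{(M+1)}_{(d_M,t_M)}(\eta)\ \vec Z^{(M+1)}_n(\eta)\big).$$
   Context: $(a)_k=a(a+1)\cdots(a+k-1)$, $(a)_0=1$. For real $\alpha$ and $m\in\mathbb{Z}_{\ge0}$ the Laguerre polynomial is $L^{(\alpha)}_m(\eta)=\frac{1}{m!}\sum_{k=0}^m\frac{(-m)_k}{k!}(\alpha+k+1)_{m-k}\eta^k$, and $L^{(\alpha)}_m\equiv0$ for $m<0$. For $a\in\mathbb{R}$, $[a]'$ denotes the greatest integer strictly less than $a$. Fix $g>\frac12$. A seed label is a pair $(\mathrm{v},t)$ with $t\in\{\mathrm{I},\mathrm{II}\}$, where $\mathrm{v}\in\mathbb{Z}_{\ge0}$ if $t=\mathrm{I}$ and $\mathrm{v}\in\{0,1,\ldots,[g-\frac12]'\}$ if $t=\mathrm{II}$. Define, for $\eta>0$, $\mu_{(\mathrm{v},\mathrm{I})}(\eta)=e^{\eta}L^{(g-\frac12)}_{\mathrm{v}}(-\eta)$, $\mu_{(\mathrm{v},\mathrm{II})}(\eta)=\eta^{\frac12-g}L^{(\frac12-g)}_{\mathrm{v}}(\eta)$, and $P_n(\eta)=L^{(g-\frac12)}_n(\eta)$. The Wronskian with respect to $\eta$ is $\mathrm{W}[f_1,\ldots,f_m](\eta)=\det\big(\frac{d^{j-1}f_k}{d\eta^{j-1}}\big)_{1\le j,k\le m}$. For an ordered list $\mathcal{D}=((d_1,t_1),\ldots,(d_M,t_M))$ of seed labels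 with $M_{\mathrm{I}}$ of Type I and $M_{\mathrm{II}}$ of Type II, the denominator polynomial and the multi-indexed Laguerre polynomials are defined by $\Xi_{\mathcal{D}}(\eta)=\mathrm{W}[\mu_{(d_1,t_1)},\ldots,\mu_{(d_M,t_M)}](\eta)\,\eta^{(M_{\mathrm{I}}+g-\frac12)M_{\mathrm{II}}}e^{-M_{\mathrm{I}}\eta}$ and $P_{\mathcal{D},n}(\eta)=\mathrm{W}[\mu_{(d_1,t_1)},\ldots,\mu_{(d_M,t_M)},P_n](\eta)\,\eta^{(M_{\mathrm{I}}+g+\frac12)M_{\mathrm{II}}}e^{-M_{\mathrm{I}}\eta}$, $n\in\mathbb{Z}_{\ge0}$. *)

theory Defs
  imports "HOL-Analysis.Derivative" "Jordan_Normal_Form.Determinant"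
begin

definition laguerre :: "real \<Rightarrow> int \<Rightarrow> real \<Rightarrow> real" where
  "laguerre \<alpha> m \<eta> =
     (if m < 0 then 0 else
       (let m' = nat m in
        (1 / fact m') * (\<Sum>k\<le>m'. pochhammer (- real m') k / fact k
              * pochhammer (\<alpha> + real k + 1) (m' - k) * \<eta> ^ k)))"

definition strict_floor :: "real \<Rightarrow> int" where
  "strict_floor a = (GREATEST k::int. real_of_int k < a)"

datatype seed_type = TypeI | TypeII

type_synonym seed_label = "nat \<times> seed_type"

definition valid_label :: "real \<Rightarrow> seed_label \<Rightarrow> bool" where
  "valid_label g l = (case l of (v, TypeI) \<Rightarrow> True
                       | (v, TypeII) \<Rightarrow> int v \<le> strict_floor (g - 1/2))"

definition mu :: "real \<Rightarrow> seed_label \<Rightarrow> real \<Rightarrow> real" where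
  "mu g l \<eta> = (case l of
      (v, TypeI) \<Rightarrow> exp \<eta> * laguerre (g - 1/2) (int v) (- \<eta>)
    | (v, TypeII) \<Rightarrow> \<eta> powr (1/2 - g) * laguerre (1/2 - g) (int v) \<eta>)"

definition P :: "real \<Rightarrow> nat \<Rightarrow> real \<Rightarrow> real" where
  "P g n \<eta> = laguerre (g - 1/2) (int n) \<eta>"

definition wronskian :: "(real \<Rightarrow> real) list \<Rightarrow> real \<Rightarrow> real" where
  "wronskian fs \<eta> = Determinant.det (mat (length fs) (length fs)
       (\<lambda>(j, k). (deriv ^^ j) (fs ! k) \<eta>))"

definition M_I :: "seed_label list \<Rightarrow> nat" where
  "M_I D = length (filter (\<lambda>l. snd l = TypeI) D)"

definition M_II :: "seed_label list \<Rightarrow> nat" where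
  "M_II D = length (filter (\<lambda>l. snd l = TypeII) D)"

definition Xi :: "real \<Rightarrow> seed_label list \<Rightarrow> real \<Rightarrow> real" where
  "Xi g D \<eta> = wronskian (map (mu g) D) \<eta>
      * \<eta> powr ((real (M_I D) + g - 1/2) * real (M_II D)) * exp (- real (M_I D) * \<eta>)"

definition P_D :: "real \<Rightarrow> seed_label list \<Rightarrow> nat \<Rightarrow> real \<Rightarrow> real" where
  "P_D g D n \<eta> = wronskian (map (mu g) D @ [P g n]) \<eta>
      * \<eta> powr ((real (M_I D) + g + 1/2) * real (M_II D)) * exp (- real (M_I D) * \<eta>)"

definition X :: "real \<Rightarrow> nat \<Rightarrow> seed_label \<Rightarrow> nat \<Rightarrow> real \<Rightarrow> real" where
  "X g N l j \<eta> = (case l of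
      (v, TypeI) \<Rightarrow> laguerre (g + real j - 3/2) (int v) (- \<eta>)
    | (v, TypeII) \<Rightarrow> (-1) ^ (j - 1) * pochhammer (g - 1/2 - real v) (j - 1)
                      * \<eta> ^ (N - j) * laguerre (3/2 - g - real j) (int v) \<eta>)"

definition Z :: "real \<Rightarrow> nat \<Rightarrow> nat \<Rightarrow> real \<Rightarrow> real" where
  "Z g n j \<eta> = (-1) ^ (j - 1) * laguerre (g + real j - 3/2) (int n + 1 - int j) \<eta>"

end

theory Submission
  imports Defs "HOL-Computational_Algebra.Polynomial"
begin

(*
  Every derivative of a seed function and of P_n has a closed form, by three Laguerre identities:
    (L^(a)_(m+1))' = - L^(a+1)_m,
    L^(a)_v - (L^(a)_v)' = L^(a+1)_v,       i.e.  (e^x L^(a)_v(-x))' = e^x L^(a+1)_v(-x),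
    a L^(a)_v + x (L^(a)_v)' = (v + a) L^(a-1)_v,  i.e.  (x^a L^(a)_v(x))' = (v + a) x^(a-1) L^(a-1)_v(x).
  So in an N-row Wronskian the column of a Type I seed is e^x times the column X^(N), that of a
  Type II seed is x^(3/2-g-N) times X^(N), and the column of P_n is Z^(N). These column factors
  leave the determinant, and against the prefactors in the definitions of Xi and P_D they
  cancel up to x^(-M_II (M_II - 1)). Nothing here needs g > 1/2 or distinct, admissible labels.
*)

lemma det_mat_scale_cols:
  fixes A :: "nat \<Rightarrow> nat \<Rightarrow> 'a :: comm_ring_1"
  shows "Determinant.det (mat n n (\<lambda>(i, k). c k * A i k))
       = (\<Prod>k<n. c k) * Determinant.det (mat n n (\<lambda>(i, k). A i k))"
proof -
  have "Determinant.det (mat n n (\<lambda>(i, k). c k * A i k)) =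
     (\<Sum>p \<in> {p. p permutes {0..<n}}. signof p * (\<Prod>i = 0..<n. c (p i) * A i (p i)))"
    by (subst det_def'[of _ n]) (auto intro!: sum.cong prod.cong)
  also have "\<dots> = (\<Sum>p \<in> {p. p permutes {0..<n}}.
                   (\<Prod>k<n. c k) * (signof p * (\<Prod>i = 0..<n. A i (p i))))"
  proof (rule sum.cong[OF refl])
    fix p assume "p \<in> {p. p permutes {0..<n}}"
    then have "(\<Prod>i = 0..<n. c (p i)) = (\<Prod>k<n. c k)"
      using prod.permute[of p "{0..<n}" c] by (simp add: comp_def lessThan_atLeast0)
    then show "signof p * (\<Prod>i = 0..<n. c (p i) * A i (p i))
             = (\<Prod>k<n. c k) * (signof p * (\<Prod>i = 0..<n. A i (p i)))"
      by (simp add: prod.distrib)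
  qed
  also have "\<dots> = (\<Prod>k<n. c k) * Determinant.det (mat n n (\<lambda>(i, k). A i k))"
    by (subst det_def'[of _ n]) (auto simp: sum_distrib_left intro!: sum.cong prod.cong)
  finally show ?thesis .
qed

lemma wronskian_eq_scaled_det:
  assumes "length fs = N"
    and "\<And>j k. j < N \<Longrightarrow> k < N \<Longrightarrow> (deriv ^^ j) (fs ! k) \<eta> = c k * A j k"
  shows "wronskian fs \<eta> = (\<Prod>k<N. c k) * Determinant.det (mat N N (\<lambda>(j, k). A j k))"
proof -
  have "wronskian fs \<eta> = Determinant.det (mat N N (\<lambda>(j, k). c k * A j k))"
    unfolding wronskian_def using assms
    by (auto intro!: arg_cong[where f = Determinant.det] cong_mat)
  then show ?thesis
    by (simp only: det_mat_scale_cols)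
qed

definition laguerre_coeff :: "real \<Rightarrow> nat \<Rightarrow> nat \<Rightarrow> real" where
  "laguerre_coeff a m k =
     (if k \<le> m then (-1) ^ k * pochhammer (a + real k + 1) (m - k) / (fact (m - k) * fact k)
      else 0)"

definition laguerre_poly :: "real \<Rightarrow> nat \<Rightarrow> real poly" where
  "laguerre_poly a m = (\<Sum>k\<le>m. monom (laguerre_coeff a m k) k)"

lemma coeff_laguerre_poly: "coeff (laguerre_poly a m) k = laguerre_coeff a m k"
  unfolding laguerre_poly_def by (simp add: coeff_sum laguerre_coeff_def)

lemma pochhammer_minus_of_nat_mult_fact:
  "k \<le> m \<Longrightarrow> pochhammer (- real m) k * fact (m - k) = (-1) ^ k * (fact m :: real)"
proof (induction k)
  case 0
  then show ?case by simp
next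
  case (Suc k)
  then have "(fact (m - k) :: real) = real (m - k) * fact (m - Suc k)"
    by (metis Suc_diff_Suc Suc_le_lessD fact_Suc of_nat_Suc)
  with Suc show ?case
    by (simp add: pochhammer_Suc of_nat_diff algebra_simps)
qed

lemma laguerre_eq_poly: "laguerre a (int m) x = poly (laguerre_poly a m) x"
proof -
  have "laguerre a (int m) x = (\<Sum>k\<le>m. laguerre_coeff a m k * x ^ k)"
    unfolding laguerre_def
  proof (simp add: sum_distrib_left, intro sum.cong refl)
    fix k assume "k \<in> {..m}"
    then have "k \<le> m" by simp
    then have "pochhammer (- real m) k = (-1) ^ k * fact m / fact (m - k)"
      using pochhammer_minus_of_nat_mult_fact by (simp add: field_simps)
    with \<open>k \<le> m\<close> show "pochhammer (- real m) k * pochhammer (a + real k + 1) (m - k) * x ^ k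
        / (fact m * fact k) = laguerre_coeff a m k * x ^ k"
      by (simp add: laguerre_coeff_def field_simps)
  qed
  then show ?thesis
    by (simp add: laguerre_poly_def poly_sum poly_monom)
qed

lemma pderiv_laguerre_poly_Suc: "pderiv (laguerre_poly a (Suc m)) = - laguerre_poly (a + 1) m"
proof (rule poly_eqI)
  fix k
  show "coeff (pderiv (laguerre_poly a (Suc m))) k = coeff (- laguerre_poly (a + 1) m) k"
  proof (cases "k \<le> m")
    case True
    then have "Suc m - Suc k = m - k" by simp
    moreover have "(fact (Suc k) :: real) = real (Suc k) * fact k"
      by (simp del: of_nat_Suc)
    ultimately show ?thesis using True
      by (simp add: coeff_pderiv coeff_laguerre_poly laguerre_coeff_def del: fact_Suc of_nat_Suc)
        (simp add: field_simps)
  next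
    case False
    then show ?thesis by (simp add: coeff_pderiv coeff_laguerre_poly laguerre_coeff_def)
  qed
qed

lemma pderiv_laguerre_poly_0: "pderiv (laguerre_poly a 0) = 0"
  by (simp add: laguerre_poly_def laguerre_coeff_def)

lemma laguerre_poly_minus_pderiv:
  "laguerre_poly a v - pderiv (laguerre_poly a v) = laguerre_poly (a + 1) v"
proof (rule poly_eqI)
  fix k
  show "coeff (laguerre_poly a v - pderiv (laguerre_poly a v)) k = coeff (laguerre_poly (a + 1) v) k"
  proof (cases "k < v")
    case True
    define d where "d = v - Suc k"
    define c where "c = (-1) ^ k * pochhammer (a + real k + 2) d / (fact d * fact k)"
    have d: "v - k = Suc d" "v - Suc k = d"
      using True by (simp_all add: d_def)
    have fact_Suc': "(fact (Suc k) :: real) = (real k + 1) * fact k"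
      "(fact (Suc d) :: real) = (real d + 1) * fact d"
      by (simp_all add: algebra_simps)
    have "laguerre_coeff a v k = c * (a + real k + 1) / (real d + 1)"
      using True unfolding laguerre_coeff_def c_def d fact_Suc'
      by (simp add: pochhammer_rec ac_simps)
    moreover have "(real k + 1) * laguerre_coeff a v (Suc k) = - c"
      using True unfolding laguerre_coeff_def c_def d fact_Suc' by (simp add: add_ac)
    moreover have "laguerre_coeff (a + 1) v k = c * (a + real k + 2 + real d) / (real d + 1)"
      using True unfolding laguerre_coeff_def c_def d fact_Suc'
      by (simp add: pochhammer_Suc ac_simps)
    moreover have "c * (a + real k + 2 + real d) / (real d + 1)
                 = c * (a + real k + 1) / (real d + 1) + c"
      by (simp add: field_simps)
    ultimately show ?thesis
      by (simp add: coeff_pderiv coeff_laguerre_poly add_ac)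
  next
    case False
    then show ?thesis
      by (cases "k = v") (simp_all add: coeff_pderiv coeff_laguerre_poly laguerre_coeff_def)
  qed
qed

lemma laguerre_poly_Euler_operator:
  "smult b (laguerre_poly b v) + pCons 0 (pderiv (laguerre_poly b v))
     = smult (real v + b) (laguerre_poly (b - 1) v)"
proof (rule poly_eqI)
  fix k
  have coeff_eq: "(b + real k) * laguerre_coeff b v k = (real v + b) * laguerre_coeff (b - 1) v k"
  proof (cases "k \<le> v")
    case True
    have "(b + real k) * pochhammer (b + real k + 1) (v - k) = pochhammer (b + real k) (Suc (v - k))"
      by (simp add: pochhammer_rec)
    also have "\<dots> = (real v + b) * pochhammer (b + real k) (v - k)"
      using True by (simp add: pochhammer_Suc of_nat_diff)
    finally show ?thesis
      using True by (simp add: laguerre_coeff_def)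
  next
    case False
    then show ?thesis by (simp add: laguerre_coeff_def)
  qed
  then show "coeff (smult b (laguerre_poly b v) + pCons 0 (pderiv (laguerre_poly b v))) k
           = coeff (smult (real v + b) (laguerre_poly (b - 1) v)) k"
    by (cases k) (simp_all add: coeff_pderiv coeff_laguerre_poly algebra_simps del: of_nat_Suc)
qed

lemma laguerre_negative: "m < 0 \<Longrightarrow> laguerre a m x = 0"
  by (simp add: laguerre_def)

lemma laguerre_has_real_derivative:
  "(laguerre a m has_real_derivative - laguerre (a + 1) (m - 1) x) (at x)"
proof (cases "m < 0")
  case True
  then have "laguerre a m = (\<lambda>_. 0)"
    by (simp add: laguerre_negative fun_eq_iff)
  with True show ?thesis
    by (simp add: laguerre_negative)
next
  case False
  then obtain m' where m: "m = int m'"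
    by (metis nonneg_int_cases not_less)
  have "laguerre a m = poly (laguerre_poly a m')"
    by (simp add: m laguerre_eq_poly fun_eq_iff)
  moreover have "- laguerre (a + 1) (m - 1) x = poly (pderiv (laguerre_poly a m')) x"
    by (cases m') (simp_all add: m laguerre_negative pderiv_laguerre_poly_0
                     pderiv_laguerre_poly_Suc laguerre_eq_poly)
  ultimately show ?thesis
    by (simp only: poly_DERIV)
qed

lemma exp_laguerre_reflected_has_real_derivative:
  "((\<lambda>x. exp x * laguerre a (int v) (- x)) has_real_derivative
      exp y * laguerre (a + 1) (int v) (- y)) (at y)"
proof -
  let ?L = "laguerre_poly a v"
  have "((\<lambda>x. exp x * poly ?L (- x)) has_real_derivative
          exp y * poly ?L (- y) + exp y * (poly (pderiv ?L) (- y) * - 1)) (at y)"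
    by (intro derivative_eq_intros DERIV_chain2[OF poly_DERIV] | simp)+
  moreover have "poly ?L (- y) - poly (pderiv ?L) (- y) = poly (laguerre_poly (a + 1) v) (- y)"
    using arg_cong[OF laguerre_poly_minus_pderiv, of "\<lambda>p. poly p (- y)"] by simp
  ultimately show ?thesis
    by (simp add: laguerre_eq_poly algebra_simps)
qed

lemma powr_laguerre_has_real_derivative:
  assumes "y > 0"
  shows "((\<lambda>x. x powr a * laguerre a (int v) x) has_real_derivative
           (real v + a) * (y powr (a - 1) * laguerre (a - 1) (int v) y)) (at y)"
proof -
  let ?L = "laguerre_poly a v"
  have "((\<lambda>x. x powr a * poly ?L x) has_real_derivative
          y powr (a - 1) * (a * poly ?L y + y * poly (pderiv ?L) y)) (at y)"
  proof -
    have "y powr a = y * y powr (a - 1)"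
      using assms by (simp add: powr_mult_base)
    then show ?thesis
      using DERIV_mult[OF has_real_derivative_powr[OF assms] poly_DERIV, of a ?L]
      by (simp add: algebra_simps)
  qed
  moreover have "a * poly ?L y + y * poly (pderiv ?L) y = (real v + a) * poly (laguerre_poly (a - 1) v) y"
    using arg_cong[OF laguerre_poly_Euler_operator[of a v], of "\<lambda>p. poly p y"] by simp
  ultimately show ?thesis
    by (simp add: laguerre_eq_poly ac_simps)
qed

lemma funpow_deriv_P:
  "(deriv ^^ j) (P g n) = (\<lambda>\<eta>. (-1) ^ j * laguerre (g - 1/2 + real j) (int n - int j) \<eta>)"
proof (induction j)
  case 0
  then show ?case by (simp add: P_def fun_eq_iff)
next
  case (Suc j)
  have "((\<lambda>\<eta>. (-1) ^ j * laguerre (g - 1/2 + real j) (int n - int j) \<eta>) has_real_derivative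
          (-1) ^ Suc j * laguerre (g - 1/2 + real (Suc j)) (int n - int (Suc j)) y) (at y)" for y
  proof -
    have "g - 1/2 + real j + 1 = g - 1/2 + real (Suc j)" "int n - int j - 1 = int n - int (Suc j)"
      by simp_all
    then show ?thesis
      using DERIV_cmult[OF laguerre_has_real_derivative[of "g - 1/2 + real j" "int n - int j" y],
                        of "(-1) ^ j"]
      by (simp only:) simp
  qed
  then show ?case
    by (simp add: Suc DERIV_imp_deriv fun_eq_iff)
qed

lemma funpow_deriv_mu_TypeI:
  "(deriv ^^ j) (mu g (v, TypeI)) = (\<lambda>\<eta>. exp \<eta> * laguerre (g - 1/2 + real j) (int v) (- \<eta>))"
proof (induction j)
  case 0
  then show ?case by (simp add: mu_def fun_eq_iff)
next
  case (Suc j)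
  have "g - 1/2 + real j + 1 = g - 1/2 + real (Suc j)"
    by simp
  then have "deriv (\<lambda>\<eta>. exp \<eta> * laguerre (g - 1/2 + real j) (int v) (- \<eta>)) y
           = exp y * laguerre (g - 1/2 + real (Suc j)) (int v) (- y)" for y
    using exp_laguerre_reflected_has_real_derivative[of "g - 1/2 + real j" v y]
    by (simp only: DERIV_imp_deriv)
  then show ?case
    by (simp add: Suc fun_eq_iff)
qed

lemma funpow_deriv_mu_TypeII:
  assumes "y > 0"
  shows "(deriv ^^ j) (mu g (v, TypeII)) y = (-1) ^ j * pochhammer (g - 1/2 - real v) j
           * (y powr (1/2 - g - real j) * laguerre (1/2 - g - real j) (int v) y)"
  using assms
proof (induction j arbitrary: y)
  case 0
  then show ?case by (simp add: mu_def)
next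
  case (Suc j)
  let ?a = "1/2 - g - real j"
  let ?K = "(-1) ^ j * pochhammer (g - 1/2 - real v) j"
  have "\<forall>\<^sub>F x in nhds y.
          (deriv ^^ j) (mu g (v, TypeII)) x = ?K * (x powr ?a * laguerre ?a (int v) x)"
    using eventually_nhds_in_open[of "{0<..}" y] Suc.prems
    by (auto elim!: eventually_mono intro: Suc.IH)
  then have "(deriv ^^ Suc j) (mu g (v, TypeII)) y
           = deriv (\<lambda>x. ?K * (x powr ?a * laguerre ?a (int v) x)) y"
    by (simp add: deriv_cong_ev)
  also have "\<dots> = ?K * ((real v + ?a) * (y powr (?a - 1) * laguerre (?a - 1) (int v) y))"
    by (intro DERIV_imp_deriv DERIV_cmult powr_laguerre_has_real_derivative Suc.prems)
  also have "\<dots> = (-1) ^ Suc j * pochhammer (g - 1/2 - real v) (Suc j)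
           * (y powr (1/2 - g - real (Suc j)) * laguerre (1/2 - g - real (Suc j)) (int v) y)"
    by (simp add: pochhammer_Suc algebra_simps)
  finally show ?case .
qed

definition seed_factor :: "real \<Rightarrow> nat \<Rightarrow> real \<Rightarrow> seed_label \<Rightarrow> real" where
  "seed_factor g N \<eta> l = (case snd l of TypeI \<Rightarrow> exp \<eta> | TypeII \<Rightarrow> \<eta> powr (3/2 - g - real N))"

lemma funpow_deriv_mu_eq_X:
  assumes "j < N" and "\<eta> > 0"
  shows "(deriv ^^ j) (mu g l) \<eta> = seed_factor g N \<eta> l * X g N l (Suc j) \<eta>"
proof -
  obtain v t where l: "l = (v, t)"
    by (cases l)
  show ?thesis
  proof (cases t)
    case TypeI
    have arg: "g + real (Suc j) - 3/2 = g - 1/2 + real j"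
      by simp
    show ?thesis
      by (simp add: l TypeI funpow_deriv_mu_TypeI seed_factor_def X_def arg del: of_nat_Suc)
  next
    case TypeII
    have arg: "3/2 - g - real (Suc j) = 1/2 - g - real j"
      by simp
    have "3/2 - g - real N + real (N - Suc j) = 1/2 - g - real j"
      using assms by (simp add: of_nat_diff)
    then have "\<eta> powr (1/2 - g - real j) = \<eta> powr (3/2 - g - real N) * \<eta> ^ (N - Suc j)"
      using assms by (metis powr_add powr_realpow)
    then show ?thesis
      using assms
      by (simp add: l TypeII funpow_deriv_mu_TypeII seed_factor_def X_def arg del: of_nat_Suc)
  qed
qed

lemma funpow_deriv_P_eq_Z: "(deriv ^^ j) (P g n) \<eta> = Z g n (Suc j) \<eta>"
proof -
  have args: "g + real (Suc j) - 3/2 = g - 1/2 + real j" "int n + 1 - int (Suc j) = int n - int j"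
    by simp_all
  show ?thesis
    by (simp add: funpow_deriv_P Z_def args del: of_nat_Suc)
qed

lemma prod_seed_factor:
  "(\<Prod>k<length D. seed_factor g N \<eta> (D ! k))
     = exp \<eta> ^ M_I D * (\<eta> powr (3/2 - g - real N)) ^ M_II D"
proof (induction D)
  case Nil
  then show ?case by (simp add: M_I_def M_II_def)
next
  case (Cons l D)
  have "(\<Prod>k<length (l # D). seed_factor g N \<eta> ((l # D) ! k))
      = seed_factor g N \<eta> l * (\<Prod>k<length D. seed_factor g N \<eta> (D ! k))"
    by (simp only: length_Cons prod.lessThan_Suc_shift nth_Cons_0 nth_Cons_Suc)
  with Cons show ?case
    by (cases "snd l") (simp_all add: seed_factor_def M_I_def M_II_def)
qed

lemma length_eq_M_I_plus_M_II: "length D = M_I D + M_II D"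
proof (induction D)
  case Nil
  then show ?case by (simp add: M_I_def M_II_def)
next
  case (Cons l D)
  then show ?case by (cases "snd l") (simp_all add: M_I_def M_II_def)
qed

lemma seed_factors_times_gauge:
  assumes "\<eta> > 0" and "N = length D + c"
  shows "(\<Prod>k<length D. seed_factor g N \<eta> (D ! k))
           * (\<eta> powr ((real (M_I D) + g - 1/2 + real c) * real (M_II D)) * exp (- real (M_I D) * \<eta>))
         = \<eta> powr (- real (M_II D * (M_II D - 1)))"
proof -
  have "exp \<eta> ^ M_I D * exp (- real (M_I D) * \<eta>) = 1"
    by (simp add: exp_of_nat_mult[symmetric] exp_add[symmetric])
  moreover have "real (M_II D) * (3/2 - g - real N) + (real (M_I D) + g - 1/2 + real c) * real (M_II D)
               = - real (M_II D * (M_II D - 1))"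
    using assms(2) length_eq_M_I_plus_M_II[of D] by (cases "M_II D") (simp_all add: algebra_simps)
  ultimately show ?thesis
    using assms(1) by (simp add: prod_seed_factor powr_power powr_add[symmetric] ac_simps)
qed

theorem mainTheorem1:
  fixes g :: real and D :: "seed_label list" and n :: nat and \<eta> :: real
  assumes "g > 1/2"
    and "\<forall>l\<in>set D. valid_label g l"
    and "distinct D"
    and "\<eta> > 0"
  shows "(Xi g D \<eta> = \<eta> powr (- real (M_II D * (M_II D - 1)))
           * Determinant.det (mat (length D) (length D)
                (\<lambda>(i, k). X g (length D) (D ! k) (i + 1) \<eta>))) \<and>
         (P_D g D n \<eta> = \<eta> powr (- real (M_II D * (M_II D - 1)))
           * Determinant.det (mat (length D + 1) (length D + 1)
                (\<lambda>(i, k). if k < length D then X g (length D + 1) (D ! k) (i + 1) \<eta>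
                          else Z g n (i + 1) \<eta>)))"
proof
  let ?M = "length D"
  have "wronskian (map (mu g) D) \<eta> = (\<Prod>k<?M. seed_factor g ?M \<eta> (D ! k))
          * Determinant.det (mat ?M ?M (\<lambda>(i, k). X g ?M (D ! k) (i + 1) \<eta>))"
    using assms(4) by (intro wronskian_eq_scaled_det) (simp_all add: funpow_deriv_mu_eq_X)
  then show "Xi g D \<eta> = \<eta> powr (- real (M_II D * (M_II D - 1)))
           * Determinant.det (mat ?M ?M (\<lambda>(i, k). X g ?M (D ! k) (i + 1) \<eta>))"
    using seed_factors_times_gauge[OF assms(4), of ?M D 0 g]
    by (simp add: Xi_def ac_simps)
  let ?c = "\<lambda>k. if k < ?M then seed_factor g (?M + 1) \<eta> (D ! k) else 1"
  have "wronskian (map (mu g) D @ [P g n]) \<eta> = (\<Prod>k<?M + 1. ?c k)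
          * Determinant.det (mat (?M + 1) (?M + 1)
              (\<lambda>(i, k). if k < ?M then X g (?M + 1) (D ! k) (i + 1) \<eta> else Z g n (i + 1) \<eta>))"
    using assms(4)
    by (intro wronskian_eq_scaled_det)
      (simp_all add: nth_append funpow_deriv_mu_eq_X funpow_deriv_P_eq_Z)
  then show "P_D g D n \<eta> = \<eta> powr (- real (M_II D * (M_II D - 1)))
           * Determinant.det (mat (?M + 1) (?M + 1)
              (\<lambda>(i, k). if k < ?M then X g (?M + 1) (D ! k) (i + 1) \<eta> else Z g n (i + 1) \<eta>))"
    using seed_factors_times_gauge[OF assms(4), of "?M + 1" D 1 g]
    by (simp add: P_D_def prod.lessThan_Suc ac_simps)
qed

end
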